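(* In the setting below, if $p,q\in X$ satisfy $S_p\cap S_q=\emptyset$, then at most one of $p,q$ has a strange index.
   Context: Setting: $E=\{e_0,\dots,e_n\}\subset\mathbb R^n$ is the vertex set of an $n$-simplex with $e_0+\cdots+e_n=0$, and $X\subset\mathbb R^n\setminus\{0\}$ is a finite set with $E\subseteq X$, no element of $X$ a positive multiple of another, such that every $n+1$ points of $X$ are in good position. (A finite set $A$ is in conical position if $0\notin\operatorname{conv}A$ and no point of $A$ lies in the positive hull—set of nonnegative linear combinations—of the other points; it is in good position otherwise.) For $p\in X$, the support $S_p$ is the minimal subset of $E$ whose positive hull contains $p$; then $p=\sum_{e_i\in S_p}\lambda_ie_i$ uniquely with all $\lambda_i>0$. Convention: each $p\in X$ is replaced by the positive multiple for which $\min_{e_i\in S_p}\lambda_i=1$. An element $e_j\in S_p$ is a strange index of $p$ if $\lambda_j>1$ (under these hypotheses there is at most one). *)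

theory Defs
  imports "HOL-Analysis.Analysis"
begin

definition pos_hull :: "'a::real_vector set \<Rightarrow> 'a set" where
  "pos_hull A = {y. \<exists>c. (\<forall>a\<in>A. c a \<ge> 0) \<and> y = (\<Sum>a\<in>A. c a *\<^sub>R a)}"

definition conical_position :: "'a::real_vector set \<Rightarrow> bool" where
  "conical_position A \<longleftrightarrow> 0 \<notin> convex hull A \<and> (\<forall>a\<in>A. a \<notin> pos_hull (A - {a}))"

definition good_position :: "'a::real_vector set \<Rightarrow> bool" where
  "good_position A \<longleftrightarrow> \<not> conical_position A"

definition support :: "'a::real_vector set \<Rightarrow> 'a \<Rightarrow> 'a set" where
  "support E p = (THE S. S \<subseteq> E \<and> p \<in> pos_hull S \<and> (\<forall>T. T \<subset> S \<longrightarrow> p \<notin> pos_hull T))"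

definition supp_coeff :: "'a::real_vector set \<Rightarrow> 'a \<Rightarrow> 'a \<Rightarrow> real" where
  "supp_coeff E p = (THE l. (\<forall>v\<in>support E p. l v > 0) \<and> (\<forall>v. v \<notin> support E p \<longrightarrow> l v = 0)
       \<and> p = (\<Sum>v\<in>support E p. l v *\<^sub>R v))"

definition norm_coeff :: "'a::real_vector set \<Rightarrow> 'a \<Rightarrow> 'a \<Rightarrow> real" where
  "norm_coeff E p v = supp_coeff E p v / Min (supp_coeff E p ` support E p)"

definition strange_index :: "'a::real_vector set \<Rightarrow> 'a \<Rightarrow> 'a \<Rightarrow> bool" where
  "strange_index E p v \<longleftrightarrow> v \<in> support E p \<and> norm_coeff E p v > 1"

definition has_strange_index :: "'a::real_vector set \<Rightarrow> 'a \<Rightarrow> bool" where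
  "has_strange_index E p \<longleftrightarrow> (\<exists>v. strange_index E p v)"

end

theory Submission
  imports Defs
begin

text \<open>
  Suppose both have a strange index: there are \<open>i, j \<in> S\<^sub>p\<close> with \<open>\<lambda>\<^sub>i < \<lambda>\<^sub>j\<close> and
  \<open>l, k \<in> S\<^sub>q\<close> with \<open>\<mu>\<^sub>l < \<mu>\<^sub>k\<close>. Replacing the vertices \<open>i\<close>, \<open>l\<close> by \<open>p\<close>, \<open>q\<close> gives \<open>n + 1\<close> points of \<open>X\<close>. The only
  linear relations among the vertices are the multiples of \<open>e\<^sub>0 + \<dots> + e\<^sub>n = 0\<close>, so in a relation
  among the new points every vertex coefficient is determined by those of \<open>p\<close> and \<open>q\<close>; comparing
  the coefficients at \<open>i\<close>, \<open>l\<close>, \<open>j\<close>, \<open>k\<close> shows that a relation with at most one negative coefficient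
  is trivial. So the new points are in conical position, which contradicts good position.
\<close>

lemma conical_positionI:
  fixes A :: "'a::real_vector set"
  assumes "finite A"
    and vanish: "\<And>d a\<^sub>0. (\<Sum>a\<in>A. d a *\<^sub>R a) = 0 \<Longrightarrow> \<forall>a\<in>A - {a\<^sub>0}. d a \<ge> 0 \<Longrightarrow> \<forall>a\<in>A. d a = 0"
  shows "conical_position A"
  unfolding conical_position_def
proof safe
  assume "0 \<in> convex hull A"
  then obtain d where d: "\<forall>a\<in>A. 0 \<le> d a" "sum d A = 1" "(\<Sum>a\<in>A. d a *\<^sub>R a) = 0"
    using convex_hull_finite[OF \<open>finite A\<close>] by auto
  with vanish[of d] have "sum d A = 0" by simp
  with d(2) show False by simp
next
  fix a assume "a \<in> A" "a \<in> pos_hull (A - {a})"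
  then obtain c where c: "\<forall>x\<in>A - {a}. c x \<ge> 0" "a = (\<Sum>x\<in>A - {a}. c x *\<^sub>R x)"
    by (auto simp: pos_hull_def)
  define d where "d x = (if x = a then -1 else c x)" for x
  have "(\<Sum>x\<in>A - {a}. d x *\<^sub>R x) = (\<Sum>x\<in>A - {a}. c x *\<^sub>R x)"
    by (rule sum.cong) (auto simp: d_def)
  then have "(\<Sum>x\<in>A. d x *\<^sub>R x) = - a + (\<Sum>x\<in>A - {a}. c x *\<^sub>R x)"
    using \<open>finite A\<close> \<open>a \<in> A\<close> by (simp add: sum.remove d_def)
  with c have "(\<Sum>x\<in>A. d x *\<^sub>R x) = 0" by simp
  with vanish[of d a] c(1) \<open>a \<in> A\<close> show False by (auto simp: d_def)
qed

lemma exchange_relation_coeffs_vanish: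
  fixes a\<^sub>i a\<^sub>j b\<^sub>l b\<^sub>k d\<^sub>p d\<^sub>q d\<^sub>j d\<^sub>k c :: real
  assumes "0 < a\<^sub>i" "a\<^sub>i < a\<^sub>j" "0 < b\<^sub>l" "b\<^sub>l < b\<^sub>k"
    and c_i: "d\<^sub>p * a\<^sub>i = c" and c_l: "d\<^sub>q * b\<^sub>l = c"
    and c_j: "d\<^sub>j + d\<^sub>p * a\<^sub>j = c" and c_k: "d\<^sub>k + d\<^sub>q * b\<^sub>k = c"
    and "d\<^sub>p \<ge> 0 \<or> d\<^sub>q \<ge> 0" and "d\<^sub>j \<ge> 0 \<or> d\<^sub>k \<ge> 0"
  shows "d\<^sub>p = 0 \<and> d\<^sub>q = 0"
proof -
  have "c \<ge> 0"
  proof (rule ccontr)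
    assume "\<not> c \<ge> 0"
    with c_i c_l have "d\<^sub>p * a\<^sub>i < 0" "d\<^sub>q * b\<^sub>l < 0" by auto
    with assms(1,3) have "d\<^sub>p < 0" "d\<^sub>q < 0" by (simp_all add: mult_less_0_iff)
    with assms(9) show False by linarith
  qed
  with c_i c_l have "d\<^sub>p * a\<^sub>i \<ge> 0" "d\<^sub>q * b\<^sub>l \<ge> 0" by auto
  with assms(1,3) have "d\<^sub>p \<ge> 0" "d\<^sub>q \<ge> 0" by (simp_all add: zero_le_mult_iff)
  have "d\<^sub>p = 0 \<or> d\<^sub>q = 0"
  proof (rule ccontr)
    assume "\<not> (d\<^sub>p = 0 \<or> d\<^sub>q = 0)"
    with \<open>d\<^sub>p \<ge> 0\<close> \<open>d\<^sub>q \<ge> 0\<close> have "d\<^sub>p * a\<^sub>i < d\<^sub>p * a\<^sub>j" "d\<^sub>q * b\<^sub>l < d\<^sub>q * b\<^sub>k"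
      using assms(2,4) by simp_all
    with c_i c_j c_k c_l have "d\<^sub>j < 0" "d\<^sub>k < 0" by linarith+
    with assms(10) show False by linarith
  qed
  with assms(1,3) c_i c_l show ?thesis by auto
qed

locale centred_simplex =
  fixes E :: "'a::real_vector set"
  assumes finite_E: "finite E" and independent: "\<not> affine_dependent E"
    and sum_E: "\<Sum> E = 0" and affine_hull_E: "affine hull E = UNIV"
begin

lemma dependency_const:
  assumes "(\<Sum>v\<in>E. c v *\<^sub>R v) = 0" and "u \<in> E" "w \<in> E"
  shows "c u = c w"
proof -
  define m where "m = sum c E / real (card E)"
  define d where "d v = c v - m" for v
  have "card E > 0" using \<open>u \<in> E\<close> finite_E card_gt_0_iff by blast
  then have "sum d E = 0" by (simp add: d_def m_def sum_subtractf)
  moreover have "(\<Sum>v\<in>E. d v *\<^sub>R v) = 0"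
    using assms(1) sum_E by (simp add: d_def scaleR_diff_left sum_subtractf scaleR_sum_right[symmetric])
  ultimately have "\<forall>v\<in>E. d v = 0"
    using independent finite_E affine_dependent_explicit_finite by blast
  with assms(2,3) show ?thesis by (auto simp: d_def)
qed

lemma combination_eq_imp_diff_const:
  assumes "(\<Sum>v\<in>E. f v *\<^sub>R v) = (\<Sum>v\<in>E. g v *\<^sub>R v)" and "u \<in> E" "w \<in> E"
  shows "f u - g u = f w - g w"
  using assms by (intro dependency_const[of "\<lambda>v. f v - g v"])
    (auto simp: scaleR_diff_left sum_subtractf)

lemma in_pos_hull_E: "x \<in> pos_hull E"
proof -
  obtain u where u: "sum u E = 1" "(\<Sum>v\<in>E. u v *\<^sub>R v) = x"
    using affine_hull_E affine_hull_finite[OF finite_E] by blast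
  define m where "m = Min (u ` E)"
  have "\<forall>v\<in>E. u v - m \<ge> 0" using finite_E by (auto simp: m_def)
  moreover have "(\<Sum>v\<in>E. (u v - m) *\<^sub>R v) = x"
    using u sum_E by (simp add: scaleR_diff_left sum_subtractf scaleR_sum_right[symmetric])
  ultimately show ?thesis
    unfolding pos_hull_def by (intro CollectI exI[of _ "\<lambda>v. u v - m"]) simp
qed

lemma sum_vanishing_outside:
  assumes "S \<subseteq> E" "\<forall>v. v \<notin> S \<longrightarrow> l v = 0"
  shows "(\<Sum>v\<in>E. l v *\<^sub>R v) = (\<Sum>v\<in>S. l v *\<^sub>R v)"
  using assms finite_E by (intro sum.mono_neutral_right) auto

definition minimal_support :: "'a \<Rightarrow> 'a set \<Rightarrow> bool" where
  "minimal_support x S \<longleftrightarrow> S \<subseteq> E \<and> x \<in> pos_hull S \<and> (\<forall>T. T \<subset> S \<longrightarrow> x \<notin> pos_hull T)"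

lemma minimal_support_exists:
  assumes "T \<subseteq> E" "x \<in> pos_hull T"
  obtains S where "S \<subseteq> T" "minimal_support x S"
proof -
  obtain S where S: "S \<subseteq> T" "x \<in> pos_hull S"
    and least: "\<And>S'. S' \<subseteq> T \<and> x \<in> pos_hull S' \<Longrightarrow> card S \<le> card S'"
    using ex_has_least_nat[of "\<lambda>S. S \<subseteq> T \<and> x \<in> pos_hull S" T card] assms by blast
  have "finite S" using finite_subset[OF subset_trans[OF S(1) assms(1)] finite_E] .
  have "x \<notin> pos_hull S'" if "S' \<subset> S" for S'
  proof
    assume "x \<in> pos_hull S'"
    with that S(1) have "card S \<le> card S'" by (intro least) auto
    moreover have "card S' < card S" using psubset_card_mono[OF \<open>finite S\<close> that] .
    ultimately show False by simp
  qed
  with S assms(1) that show ?thesis unfolding minimal_support_def by blast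
qed

lemma minimal_support_coeffs:
  assumes "minimal_support x S"
  obtains c where "\<forall>v\<in>S. c v > 0" "x = (\<Sum>v\<in>S. c v *\<^sub>R v)"
proof -
  obtain c where c: "\<forall>v\<in>S. c v \<ge> 0" "x = (\<Sum>v\<in>S. c v *\<^sub>R v)"
    using assms by (auto simp: minimal_support_def pos_hull_def)
  have "finite S" using assms finite_E unfolding minimal_support_def by (blast intro: finite_subset)
  have "c a > 0" if "a \<in> S" for a
  proof (rule ccontr)
    assume "\<not> c a > 0"
    with c(1) that have "c a = 0" by force
    with c \<open>finite S\<close> that have "x \<in> pos_hull (S - {a})"
      unfolding pos_hull_def by (auto simp: sum.remove)
    with assms that show False by (auto simp: minimal_support_def)
  qed
  with c that show ?thesis by blast
qed

text \<open>Subtracting the smallest coefficient uses \<open>\<Sum> E = 0\<close> to drop a vertex.\<close>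

lemma minimal_support_neq_E:
  assumes "minimal_support x S"
  shows "S \<noteq> E"
proof
  assume S: "S = E"
  obtain c where c: "\<forall>v\<in>E. c v > 0" "x = (\<Sum>v\<in>E. c v *\<^sub>R v)"
    using minimal_support_coeffs[OF assms] S by blast
  have "E \<noteq> {}" using affine_hull_E by auto
  then have "Min (c ` E) \<in> c ` E" using finite_E by (intro Min_in) auto
  then obtain a where a: "a \<in> E" "c a = Min (c ` E)" by auto
  have ge: "c v - c a \<ge> 0" if "v \<in> E" for v
    using a(2) finite_E that by (simp add: Min.coboundedI)
  have "x = (\<Sum>v\<in>E. (c v - c a) *\<^sub>R v)"
    using c(2) sum_E by (simp add: scaleR_diff_left sum_subtractf scaleR_sum_right[symmetric])
  also have "\<dots> = (\<Sum>v\<in>E - {a}. (c v - c a) *\<^sub>R v)"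
    using a(1) finite_E by (simp add: sum.remove)
  finally have "x \<in> pos_hull (E - {a})"
    unfolding pos_hull_def using ge by (intro CollectI exI[of _ "\<lambda>v. c v - c a"]) auto
  moreover have "E - {a} \<subset> S" using a(1) S by blast
  ultimately show False using assms unfolding minimal_support_def by blast
qed

lemma minimal_support_unique:
  assumes "minimal_support x S\<^sub>1" "minimal_support x S\<^sub>2"
  shows "S\<^sub>1 = S\<^sub>2"
proof -
  obtain c\<^sub>1 where c\<^sub>1: "\<forall>v\<in>S\<^sub>1. c\<^sub>1 v > 0" "x = (\<Sum>v\<in>S\<^sub>1. c\<^sub>1 v *\<^sub>R v)"
    using minimal_support_coeffs[OF assms(1)] by blast
  obtain c\<^sub>2 where c\<^sub>2: "\<forall>v\<in>S\<^sub>2. c\<^sub>2 v > 0" "x = (\<Sum>v\<in>S\<^sub>2. c\<^sub>2 v *\<^sub>R v)"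
    using minimal_support_coeffs[OF assms(2)] by blast
  have sub: "S\<^sub>1 \<subseteq> E" "S\<^sub>2 \<subseteq> E" using assms by (auto simp: minimal_support_def)
  define f where "f v = (if v \<in> S\<^sub>1 then c\<^sub>1 v else 0)" for v
  define g where "g v = (if v \<in> S\<^sub>2 then c\<^sub>2 v else 0)" for v
  have "(\<Sum>v\<in>E. f v *\<^sub>R v) = (\<Sum>v\<in>S\<^sub>1. c\<^sub>1 v *\<^sub>R v)"
    using sum_vanishing_outside[OF sub(1), of f] by (simp add: f_def cong: sum.cong)
  also have "\<dots> = (\<Sum>v\<in>S\<^sub>2. c\<^sub>2 v *\<^sub>R v)" using c\<^sub>1(2) c\<^sub>2(2) by simp
  also have "\<dots> = (\<Sum>v\<in>E. g v *\<^sub>R v)"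
    using sum_vanishing_outside[OF sub(2), of g] by (simp add: g_def cong: sum.cong)
  finally have "(\<Sum>v\<in>E. f v *\<^sub>R v) = (\<Sum>v\<in>E. g v *\<^sub>R v)" .
  note diff_const = combination_eq_imp_diff_const[OF this]
  have "S\<^sub>1 \<subseteq> S\<^sub>2 \<or> S\<^sub>2 \<subseteq> S\<^sub>1"
  proof (rule ccontr)
    assume "\<not> (S\<^sub>1 \<subseteq> S\<^sub>2 \<or> S\<^sub>2 \<subseteq> S\<^sub>1)"
    then obtain a b where ab: "a \<in> S\<^sub>1" "a \<notin> S\<^sub>2" "b \<in> S\<^sub>2" "b \<notin> S\<^sub>1" by blast
    then have "f a - g a > 0" "f b - g b < 0" using c\<^sub>1(1) c\<^sub>2(1) by (auto simp: f_def g_def)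
    moreover have "f a - g a = f b - g b" using diff_const ab sub by blast
    ultimately show False by simp
  qed
  with assms show ?thesis unfolding minimal_support_def by blast
qed

lemma minimal_support_support: "minimal_support x (support E x)"
proof -
  obtain S where "minimal_support x S"
    using minimal_support_exists[OF order_refl in_pos_hull_E] .
  then have "\<exists>!S. minimal_support x S" using minimal_support_unique by blast
  then have "minimal_support x (THE S. minimal_support x S)" by (rule theI')
  then show ?thesis unfolding support_def minimal_support_def .
qed

lemma support_subset:
  assumes "T \<subseteq> E" "x \<in> pos_hull T"
  shows "support E x \<subseteq> T"
  using minimal_support_exists[OF assms] minimal_support_unique minimal_support_support by metis

lemma support_subset_E: "support E x \<subseteq> E"
  using minimal_support_support by (simp add: minimal_support_def)

lemma supp_coeff_characterization:
  "(\<forall>v\<in>support E x. supp_coeff E x v > 0) \<and> (\<forall>v. v \<notin> support E x \<longrightarrow> supp_coeff E x v = 0)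
     \<and> (\<Sum>v\<in>support E x. supp_coeff E x v *\<^sub>R v) = x"
proof -
  let ?S = "support E x"
  let ?P = "\<lambda>l. (\<forall>v\<in>?S. l v > 0) \<and> (\<forall>v. v \<notin> ?S \<longrightarrow> l v = 0) \<and> (\<Sum>v\<in>?S. l v *\<^sub>R v) = x"
  obtain c where c: "\<forall>v\<in>?S. c v > 0" "x = (\<Sum>v\<in>?S. c v *\<^sub>R v)"
    using minimal_support_coeffs[OF minimal_support_support] .
  have witness: "?P (\<lambda>v. if v \<in> ?S then c v else 0)"
    using c(1) c(2)[symmetric] by (simp cong: sum.cong)
  have uniq: "l\<^sub>1 = l\<^sub>2" if l\<^sub>1: "?P l\<^sub>1" and l\<^sub>2: "?P l\<^sub>2" for l\<^sub>1 l\<^sub>2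
  proof
    fix u
    obtain w where w: "w \<in> E" "w \<notin> ?S"
      using support_subset_E minimal_support_neq_E[OF minimal_support_support] by blast
    have sum_E_eq: "(\<Sum>v\<in>E. l v *\<^sub>R v) = x" if "?P l" for l
    proof -
      have "(\<Sum>v\<in>E. l v *\<^sub>R v) = (\<Sum>v\<in>?S. l v *\<^sub>R v)"
        by (rule sum_vanishing_outside[OF support_subset_E]) (use that in blast)
      also have "\<dots> = x" using conjunct2[OF conjunct2[OF that]] .
      finally show ?thesis .
    qed
    have "l\<^sub>1 u - l\<^sub>2 u = l\<^sub>1 w - l\<^sub>2 w" if "u \<in> E"
      by (rule combination_eq_imp_diff_const[OF _ that w(1)]) (simp only: sum_E_eq[OF l\<^sub>1] sum_E_eq[OF l\<^sub>2])
    moreover have "l\<^sub>1 v = 0 \<and> l\<^sub>2 v = 0" if "v \<notin> ?S" for v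
      using l\<^sub>1 l\<^sub>2 that by blast
    ultimately show "l\<^sub>1 u = l\<^sub>2 u"
      using support_subset_E[of x] w(2) by (cases "u \<in> ?S") auto
  qed
  have supp_coeff_eq: "supp_coeff E x = (THE l. ?P l)"
    unfolding supp_coeff_def by (simp only: eq_commute[of x])
  show ?thesis unfolding supp_coeff_eq by (rule theI[of ?P, OF witness uniq[OF _ witness]])
qed

lemma supp_coeff_pos: "v \<in> support E x \<Longrightarrow> supp_coeff E x v > 0"
  using conjunct1[OF supp_coeff_characterization[of x]] by blast

lemma supp_coeff_eq_0: "v \<notin> support E x \<Longrightarrow> supp_coeff E x v = 0"
  using conjunct1[OF conjunct2[OF supp_coeff_characterization[of x]]] by blast

lemma sum_supp_coeff: "(\<Sum>v\<in>E. supp_coeff E x v *\<^sub>R v) = x"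
proof -
  have "(\<Sum>v\<in>E. supp_coeff E x v *\<^sub>R v) = (\<Sum>v\<in>support E x. supp_coeff E x v *\<^sub>R v)"
    using support_subset_E supp_coeff_eq_0 by (intro sum_vanishing_outside) auto
  also have "\<dots> = x" using conjunct2[OF conjunct2[OF supp_coeff_characterization[of x]]] .
  finally show ?thesis .
qed

lemma has_strange_indexE:
  assumes "has_strange_index E x"
  obtains i j where "i \<in> support E x" "j \<in> support E x" "supp_coeff E x i < supp_coeff E x j"
proof -
  let ?S = "support E x" and ?l = "supp_coeff E x"
  obtain j where j: "j \<in> ?S" "?l j / Min (?l ` ?S) > 1"
    using assms by (auto simp: has_strange_index_def strange_index_def norm_coeff_def)
  have "finite ?S" using support_subset_E finite_E finite_subset by blast
  with j(1) have "Min (?l ` ?S) \<in> ?l ` ?S" by (intro Min_in) auto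
  then obtain i where i: "i \<in> ?S" "?l i = Min (?l ` ?S)" by auto
  with j supp_coeff_pos[OF i(1)] have "?l i < ?l j" by (simp add: less_divide_eq)
  with i j that show ?thesis by blast
qed

lemma has_strange_index_notin_E:
  assumes "has_strange_index E x"
  shows "x \<notin> E"
proof
  assume "x \<in> E"
  moreover have "x \<in> pos_hull {x}"
    unfolding pos_hull_def by (auto intro!: exI[of _ "\<lambda>_. 1"])
  ultimately have "support E x \<subseteq> {x}" by (intro support_subset) auto
  moreover obtain i j where "i \<in> support E x" "j \<in> support E x" "supp_coeff E x i < supp_coeff E x j"
    using has_strange_indexE[OF assms] .
  ultimately show False by auto
qed

lemma exchange_dependency:
  fixes d :: "'a \<Rightarrow> real" and p q :: 'a and E' :: "'a set"
  defines "\<gamma> v \<equiv> (if v \<in> E' then d v else 0) + d p * supp_coeff E p v + d q * supp_coeff E q v"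
  assumes E': "E' \<subseteq> E" and p: "p \<notin> insert q E'" and q: "q \<notin> E'"
    and dep: "(\<Sum>a\<in>insert p (insert q E'). d a *\<^sub>R a) = 0"
    and s: "s \<in> E" and t: "t \<in> E"
  shows "\<gamma> s = \<gamma> t"
proof (rule dependency_const[of \<gamma>])
  have "finite E'" using finite_subset[OF E' finite_E] .
  have "(\<Sum>a\<in>E'. d a *\<^sub>R a) = (\<Sum>v\<in>E. (if v \<in> E' then d v else 0) *\<^sub>R v)"
    using sum_vanishing_outside[OF E', of "\<lambda>v. if v \<in> E' then d v else 0"]
    by (simp cong: sum.cong)
  then have "(\<Sum>a\<in>insert p (insert q E'). d a *\<^sub>R a)
      = (\<Sum>v\<in>E. (if v \<in> E' then d v else 0) *\<^sub>R v) + d p *\<^sub>R (\<Sum>v\<in>E. supp_coeff E p v *\<^sub>R v)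
        + d q *\<^sub>R (\<Sum>v\<in>E. supp_coeff E q v *\<^sub>R v)"
    using \<open>finite E'\<close> p q by (simp add: sum_supp_coeff)
  also have "\<dots> = (\<Sum>v\<in>E. \<gamma> v *\<^sub>R v)"
    by (simp add: \<gamma>_def scaleR_add_left sum.distrib scaleR_sum_right)
  finally show "(\<Sum>v\<in>E. \<gamma> v *\<^sub>R v) = 0" using dep by simp
qed (fact s t)+

lemma exchange_conical_position:
  assumes disj: "support E p \<inter> support E q = {}" and "p \<notin> E" "q \<notin> E"
    and ij: "i \<in> support E p" "j \<in> support E p" "supp_coeff E p i < supp_coeff E p j"
    and lk: "l \<in> support E q" "k \<in> support E q" "supp_coeff E q l < supp_coeff E q k"
  shows "conical_position (insert p (insert q (E - {i, l})))"
proof (rule conical_positionI)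
  let ?E' = "E - {i, l}" and ?\<alpha> = "supp_coeff E p" and ?\<beta> = "supp_coeff E q"
  let ?A = "insert p (insert q ?E')"
  show "finite ?A" using finite_E by simp
  fix d a\<^sub>0
  assume dep: "(\<Sum>a\<in>?A. d a *\<^sub>R a) = 0" and nonneg: "\<forall>a\<in>?A - {a\<^sub>0}. d a \<ge> 0"
  have "p \<noteq> q" using disj ij(1) by auto
  have in_E: "i \<in> E" "j \<in> E" "l \<in> E" "k \<in> E" using ij lk support_subset_E by blast+
  have in_E': "j \<in> ?E'" "k \<in> ?E'" "i \<notin> ?E'" "l \<notin> ?E'"
    using in_E ij lk disj by auto
  have off_support: "?\<beta> i = 0" "?\<beta> j = 0" "?\<alpha> l = 0" "?\<alpha> k = 0"
    using ij lk disj by (auto intro!: supp_coeff_eq_0)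
  have pos: "?\<alpha> i > 0" "?\<beta> l > 0" using ij(1) lk(1) by (blast intro: supp_coeff_pos)+
  define c where "c = d p * ?\<alpha> i"
  have rel: "(if s \<in> ?E' then d s else 0) + d p * ?\<alpha> s + d q * ?\<beta> s = c" if "s \<in> E" for s
    using exchange_dependency[of ?E' p q d, OF _ _ _ dep that in_E(1)] \<open>p \<notin> E\<close> \<open>q \<notin> E\<close> \<open>p \<noteq> q\<close>
      in_E'(3) off_support(1) by (auto simp: c_def)
  have c_l: "d q * ?\<beta> l = c" and c_j: "d j + d p * ?\<alpha> j = c" and c_k: "d k + d q * ?\<beta> k = c"
    using rel[OF in_E(3)] rel[OF in_E(2)] rel[OF in_E(4)] in_E' off_support by simp_all
  have "p \<in> ?A - {a\<^sub>0} \<or> q \<in> ?A - {a\<^sub>0}" using \<open>p \<noteq> q\<close> by blast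
  then have "d p \<ge> 0 \<or> d q \<ge> 0" using nonneg by blast
  moreover have "j \<in> ?A - {a\<^sub>0} \<or> k \<in> ?A - {a\<^sub>0}"
    using disj ij(2) lk(2) in_E'(1,2) by blast
  then have "d j \<ge> 0 \<or> d k \<ge> 0" using nonneg by blast
  ultimately have "d p = 0" "d q = 0"
    using exchange_relation_coeffs_vanish[OF pos(1) ij(3) pos(2) lk(3) c_def[symmetric] c_l c_j c_k]
    by blast+
  then have "c = 0" by (simp add: c_def)
  then have "d s = 0" if "s \<in> ?E'" for s
    using rel[of s] that \<open>d p = 0\<close> \<open>d q = 0\<close> by simp
  with \<open>d p = 0\<close> \<open>d q = 0\<close> show "\<forall>a\<in>?A. d a = 0" by blast
qed

lemma strange_pair_conical_subset:
  assumes "has_strange_index E p" "has_strange_index E q" "support E p \<inter> support E q = {}"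
  obtains A where "A \<subseteq> insert p (insert q E)" "card A = card E" "conical_position A"
proof -
  obtain i j where ij: "i \<in> support E p" "j \<in> support E p" "supp_coeff E p i < supp_coeff E p j"
    using has_strange_indexE[OF assms(1)] .
  obtain l k where lk: "l \<in> support E q" "k \<in> support E q" "supp_coeff E q l < supp_coeff E q k"
    using has_strange_indexE[OF assms(2)] .
  have "p \<notin> E" "q \<notin> E" using has_strange_index_notin_E assms(1,2) by blast+
  have "p \<noteq> q" "i \<noteq> l" using assms(3) ij(1) lk(1) by auto
  have "{i, l} \<subseteq> E" using ij(1) lk(1) support_subset_E by blast
  moreover from card_mono[OF finite_E this] have "2 \<le> card E"
    using \<open>i \<noteq> l\<close> by simp
  ultimately have "card (E - {i, l}) + 2 = card E"
    using \<open>i \<noteq> l\<close> finite_E by (simp add: card_Diff_subset)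
  then have "card (insert p (insert q (E - {i, l}))) = card E"
    using \<open>p \<notin> E\<close> \<open>q \<notin> E\<close> \<open>p \<noteq> q\<close> finite_E by simp
  moreover have "insert p (insert q (E - {i, l})) \<subseteq> insert p (insert q E)" by blast
  ultimately show ?thesis
    using that exchange_conical_position[OF assms(3) \<open>p \<notin> E\<close> \<open>q \<notin> E\<close> ij lk] by blast
qed

end

theorem proposition6p4:
  fixes E X :: "'a::euclidean_space set" and p q :: 'a
  assumes simplex: "\<not> affine_dependent E" "card E = DIM('a) + 1"
    and sum0: "\<Sum> E = 0"
    and finX: "finite X" and X0: "0 \<notin> X" and EX: "E \<subseteq> X"
    and nomult: "\<forall>x\<in>X. \<forall>y\<in>X. \<forall>c::real. c > 0 \<and> y = c *\<^sub>R x \<longrightarrow> y = x"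
    and good: "\<forall>A. A \<subseteq> X \<and> card A = DIM('a) + 1 \<longrightarrow> good_position A"
    and pX: "p \<in> X" and qX: "q \<in> X"
    and disj: "support E p \<inter> support E q = {}"
  shows "\<not> (has_strange_index E p \<and> has_strange_index E q)"
proof
  assume strange: "has_strange_index E p \<and> has_strange_index E q"
  have "aff_dim E = int DIM('a)"
    using aff_dim_affine_independent[OF simplex(1)] simplex(2) by simp
  then have "affine hull E = UNIV" by (simp add: aff_dim_eq_full)
  then interpret centred_simplex E
    using aff_independent_finite[OF simplex(1)] simplex(1) sum0 by unfold_locales
  obtain A where "A \<subseteq> insert p (insert q E)" "card A = card E" "conical_position A"
    using strange_pair_conical_subset strange disj by blast
  moreover have "insert p (insert q E) \<subseteq> X" using EX pX qX by blast
  ultimately show False using good simplex(2) by (auto simp: good_position_def)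
qed

end
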